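(* Let $K\ge 3$ be odd, $a,b\ge1$ integers, $M\ge0$. For the $(K,a,b)$ coded caching problem for location-based content, $R^\star\ge \dfrac{K-1}{2}-\dfrac{K-1}{2(2a+b)}M$.
   Context: For integers $x\le y$, $[x:y]=\{x,x+1,\dots,y\}$ and $[n]=[1:n]$. For integers $c$ and $m\ge1$, $\langle c\rangle_m$ denotes the unique element of $\{1,\dots,m\}$ congruent to $c$ modulo $m$. The $(K,a,b)$ coded caching problem for location-based content: a server has $N=K(a+b)$ files $W_1,\dots,W_N$, each consisting of $B$ independent uniformly distributed bits. There are $K$ cache nodes, each storing $MB$ bits, and $K$ users, user $k$ having free access to cache node $k$ only. For $k\in[K]$ define $\mathcal D_{k,1}=[(k-1)(a+b)+1:ka+(k-1)b]$, $\mathcal D_{k,2}=[ka+(k-1)b+1:k(a+b)]$, $\mathcal D_{k,3}=\mathcal D_{\langle k+1\rangle_K,1}$, and $\mathcal D_k=\mathcal D_{k,1}\cup\mathcal D_{k,2}\cup\mathcal D_{k,3}$. A scheme consists of: placement functions $Z_k=\phi_k(W_1,\dots,W_N)\in\{0,1\}^{MB}$, chosen without knowledge of demands; for every demand vector $\mathbf d=(d_1,\dots,d_K)\in\mathcal D_1\times\cdots\times\mathcal D_K$, a transmitted message $X=\psi(\mathbf d,W_1,\dots,W_N)\in\{0,1\}^{RB}$; and decoding functions such that user $k$ recovers $W_{d_k}$ exactly from $(\mathbf d,Z_k,X)$ for every $\mathbf d$ and $k$. $R$ is the worst-case load and $R^\star$ is the infimum of $R$ over all schemes (and all $B$). *)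

theory Defs
  imports Complex_Main
begin

definition cyc :: "int \<Rightarrow> int \<Rightarrow> int" where
  "cyc c m = ((c - 1) mod m) + 1"

definition D1 :: "nat \<Rightarrow> nat \<Rightarrow> nat \<Rightarrow> nat set" where
  "D1 a b k = {(k - 1) * (a + b) + 1 .. k * a + (k - 1) * b}"

definition D2 :: "nat \<Rightarrow> nat \<Rightarrow> nat \<Rightarrow> nat set" where
  "D2 a b k = {k * a + (k - 1) * b + 1 .. k * (a + b)}"

definition D3 :: "nat \<Rightarrow> nat \<Rightarrow> nat \<Rightarrow> nat \<Rightarrow> nat set" where
  "D3 K a b k = D1 a b (nat (cyc (int k + 1) (int K)))"

definition Dset :: "nat \<Rightarrow> nat \<Rightarrow> nat \<Rightarrow> nat \<Rightarrow> nat set" where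
  "Dset K a b k = D1 a b k \<union> D2 a b k \<union> D3 K a b k"

text \<open>File realizations: N files of B bits each, indexed 1..N (junk indices fixed to []).\<close>
definition file_configs :: "nat \<Rightarrow> nat \<Rightarrow> (nat \<Rightarrow> bool list) set" where
  "file_configs N B = {W. \<forall>i. (i \<in> {1..N} \<longrightarrow> length (W i) = B) \<and> (i \<notin> {1..N} \<longrightarrow> W i = [])}"

definition demands :: "nat \<Rightarrow> nat \<Rightarrow> nat \<Rightarrow> (nat \<Rightarrow> nat) set" where
  "demands K a b = {d. \<forall>k. (k \<in> {1..K} \<longrightarrow> d k \<in> Dset K a b k) \<and> (k \<notin> {1..K} \<longrightarrow> d k = 0)}"

text \<open>A scheme with file size B bits, cache size m bits per node and message length L bits:
  placement phi, delivery psi, decoders mu (user k sees only d, Z_k and X).\<close>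
definition is_scheme ::
  "nat \<Rightarrow> nat \<Rightarrow> nat \<Rightarrow> nat \<Rightarrow> nat \<Rightarrow> nat \<Rightarrow>
   (nat \<Rightarrow> (nat \<Rightarrow> bool list) \<Rightarrow> bool list) \<Rightarrow>
   ((nat \<Rightarrow> nat) \<Rightarrow> (nat \<Rightarrow> bool list) \<Rightarrow> bool list) \<Rightarrow>
   (nat \<Rightarrow> (nat \<Rightarrow> nat) \<Rightarrow> bool list \<Rightarrow> bool list \<Rightarrow> bool list) \<Rightarrow> bool" where
  "is_scheme K a b B m L phi psi mu \<longleftrightarrow>
     (\<forall>W \<in> file_configs (K * (a + b)) B.
        (\<forall>k \<in> {1..K}. length (phi k W) = m) \<and>
        (\<forall>d \<in> demands K a b. length (psi d W) = L \<and>
            (\<forall>k \<in> {1..K}. mu k d (phi k W) (psi d W) = W (d k))))"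

text \<open>Achievable loads R = L/B with cache memory M (i.e. at most M*B bits per cache).\<close>
definition achievable_loads :: "nat \<Rightarrow> nat \<Rightarrow> nat \<Rightarrow> real \<Rightarrow> real set" where
  "achievable_loads K a b M =
     {real L / real B | B m L. B \<ge> 1 \<and> real m \<le> M * real B \<and>
        (\<exists>phi psi mu. is_scheme K a b B m L phi psi mu)}"

definition Rstar :: "nat \<Rightarrow> nat \<Rightarrow> nat \<Rightarrow> real \<Rightarrow> real" where
  "Rstar K a b M = Inf (achievable_loads K a b M)"

end

theory Submission
  imports Defs "HOL-Library.FuncSet"
begin

text \<open>Cut-set argument. Let \<open>t = (K - 1) / 2\<close>. The users \<open>1, 3, \<dots>, 2t - 1\<close> have pairwise
  disjoint demand windows of \<open>2a + b\<close> files each. Running the \<open>2a + b\<close> demand vectors in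
  which every such user asks for the \<open>j\<close>-th file of its window, the \<open>t\<close> caches together with
  the \<open>2a + b\<close> messages determine all \<open>t(2a + b)\<close> files of these windows. Counting bits
  gives \<open>t(2a + b) B \<le> t M B + (2a + b) R B\<close>.\<close>

lemma card_bit_lists: "card {xs :: bool list. length xs = m} = 2 ^ m"
  using card_lists_length_eq[of "UNIV :: bool set" m] by simp

lemma finite_bit_lists: "finite {xs :: bool list. length xs = m}"
  using finite_lists_length_eq[of "UNIV :: bool set" m] by simp

lemma injective_encoding_bits_bound:
  fixes E :: "('a \<Rightarrow> bool list) \<Rightarrow> bool list list \<times> bool list list"
  assumes "finite A" and "inj_on E (PiE A (\<lambda>_. {xs. length xs = B}))"
    and "E ` PiE A (\<lambda>_. {xs. length xs = B}) \<subseteq> {ys. set ys \<subseteq> {y. length y = m} \<and> length ys = t}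
                 \<times> {zs. set zs \<subseteq> {z. length z = L} \<and> length zs = n}"
  shows "B * card A \<le> m * t + L * n"
proof -
  let ?G = "PiE A (\<lambda>_. {xs :: bool list. length xs = B})"
  let ?C = "{ys :: bool list list. set ys \<subseteq> {y. length y = m} \<and> length ys = t}
            \<times> {zs :: bool list list. set zs \<subseteq> {z. length z = L} \<and> length zs = n}"
  have "finite ?C"
    using finite_lists_length_eq[OF finite_bit_lists, of m t]
      finite_lists_length_eq[OF finite_bit_lists, of L n] by (rule finite_cartesian_product)
  then have "card ?G \<le> card ?C"
    using card_inj_on_le assms(2,3) by blast
  moreover have "card ?G = (2 ^ B) ^ card A"
    using assms(1) by (simp add: card_PiE card_bit_lists)
  moreover have "card ?C = (2 ^ m) ^ t * (2 ^ L) ^ n"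
    by (simp add: card_cartesian_product card_lists_length_eq[OF finite_bit_lists] card_bit_lists)
  ultimately have "(2::nat) ^ (B * card A) \<le> 2 ^ (m * t + L * n)"
    by (simp add: power_mult power_add mult.commute)
  then show ?thesis by simp
qed

text \<open>For \<open>k < K\<close> the window \<open>\<D>\<^sub>k\<close> consists of the \<open>2a + b\<close> consecutive files starting at
  \<open>(k - 1)(a + b) + 1\<close>, and user \<open>k\<close> asks for its \<open>j\<close>-th one.\<close>
definition window_demand :: "nat \<Rightarrow> nat \<Rightarrow> nat \<Rightarrow> nat \<Rightarrow> nat \<Rightarrow> nat" where
  "window_demand K a b j k =
     (if k \<in> {1..K} then (k - 1) * (a + b) + 1 + (if k < K then j else 0) else 0)"

lemma window_demand_in_Dset:
  assumes "j < 2 * a + b" and "a \<ge> 1" and "k \<in> {1..K}"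
  shows "window_demand K a b j k \<in> Dset K a b k"
proof -
  obtain k' where k': "k = Suc k'" using assms(3) by (cases k) auto
  show ?thesis
  proof (cases "k < K")
    case True
    then have demand: "window_demand K a b j (Suc k') = k' * (a + b) + 1 + j"
      using assms(3) k' by (simp add: window_demand_def)
    have "cyc (int k + 1) (int K) = int (Suc k)"
      unfolding cyc_def using True by simp
    then have next_window: "D3 K a b (Suc k') = D1 a b (Suc (Suc k'))"
      unfolding D3_def k' by (simp only: nat_int)
    show ?thesis
      using assms(1) unfolding k' Dset_def demand next_window D1_def D2_def
      by (auto simp: algebra_simps)
  next
    case False
    with assms(3) k' have "K = Suc k'" by simp
    then have demand: "window_demand K a b j (Suc k') = k' * (a + b) + 1"
      by (simp add: window_demand_def)
    show ?thesis
      using assms(2) unfolding k' Dset_def demand D1_def by (auto simp: algebra_simps)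
  qed
qed

lemma window_demand_in_demands:
  assumes "j < 2 * a + b" and "a \<ge> 1"
  shows "window_demand K a b j \<in> demands K a b"
  using window_demand_in_Dset[OF assms] by (auto simp: demands_def window_demand_def)

lemma window_demand_odd_user:
  assumes "2 * i + 1 < K"
  shows "window_demand K a b j (2 * i + 1) = 2 * i * (a + b) + j + 1"
  using assms by (simp add: window_demand_def)

definition odd_window_files :: "nat \<Rightarrow> nat \<Rightarrow> nat \<Rightarrow> nat set" where
  "odd_window_files a b t = (\<lambda>(i, j). 2 * i * (a + b) + j + 1) ` ({..<t} \<times> {..<2 * a + b})"

lemma card_odd_window_files: "card (odd_window_files a b t) = t * (2 * a + b)"
proof -
  define c where "c = 2 * (a + b)"
  have "inj_on (\<lambda>(i, j). i * c + j) ({..<t} \<times> {..<2 * a + b})"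
  proof (rule inj_onI, clarsimp)
    fix i j i' j'
    assume "j < 2 * a + b" "j' < 2 * a + b" and eq: "i * c + j = i' * c + j'"
    then have "j < c" "j' < c" by (auto simp: c_def)
    then show "i = i' \<and> j = j'"
      using arg_cong[OF eq, of "\<lambda>x. x div c"] arg_cong[OF eq, of "\<lambda>x. x mod c"] by simp
  qed
  then have "inj_on (\<lambda>(i, j). 2 * i * (a + b) + j + 1) ({..<t} \<times> {..<2 * a + b})"
    by (auto simp: inj_on_def c_def algebra_simps)
  then show ?thesis
    unfolding odd_window_files_def by (simp add: card_image card_cartesian_product)
qed

lemma odd_window_files_bound:
  assumes "2 * t < K"
  shows "odd_window_files a b t \<subseteq> {1..K * (a + b)}"
proof
  fix f assume "f \<in> odd_window_files a b t"
  then obtain i j where ij: "i < t" "j < 2 * a + b" and f: "f = 2 * i * (a + b) + j + 1"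
    by (auto simp: odd_window_files_def)
  have "f \<le> (2 * i + 2) * (a + b)" using ij(2) f by (simp add: algebra_simps)
  also have "\<dots> \<le> K * (a + b)" using ij(1) assms by (intro mult_le_mono1) simp
  finally show "f \<in> {1..K * (a + b)}" using f by simp
qed

definition pad_files :: "nat set \<Rightarrow> nat \<Rightarrow> nat \<Rightarrow> (nat \<Rightarrow> bool list) \<Rightarrow> nat \<Rightarrow> bool list" where
  "pad_files F N B g f = (if f \<in> F then g f else if f \<in> {1..N} then replicate B False else [])"

lemma pad_files_in_file_configs:
  assumes "F \<subseteq> {1..N}" and "g \<in> PiE F (\<lambda>_. {xs. length xs = B})"
  shows "pad_files F N B g \<in> file_configs N B"
  using assms by (auto simp: file_configs_def pad_files_def)

lemma is_scheme_cache_length: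
  assumes "is_scheme K a b B m L phi psi mu" and "W \<in> file_configs (K * (a + b)) B"
    and "k \<in> {1..K}"
  shows "length (phi k W) = m"
  using assms unfolding is_scheme_def by blast

lemma is_scheme_message_length:
  assumes "is_scheme K a b B m L phi psi mu" and "W \<in> file_configs (K * (a + b)) B"
    and "d \<in> demands K a b"
  shows "length (psi d W) = L"
  using assms unfolding is_scheme_def by blast

lemma is_scheme_decodes:
  assumes "is_scheme K a b B m L phi psi mu" and "W \<in> file_configs (K * (a + b)) B"
    and "d \<in> demands K a b" and "k \<in> {1..K}"
  shows "mu k d (phi k W) (psi d W) = W (d k)"
  using assms unfolding is_scheme_def by blast

lemma odd_user_recovers_window_file:
  assumes scheme: "is_scheme K a b B m L phi psi mu" and "2 * t < K" and "a \<ge> 1"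
    and g: "g \<in> PiE (odd_window_files a b t) (\<lambda>_. {xs. length xs = B})"
    and "i < t" and "j < 2 * a + b"
  defines "W \<equiv> pad_files (odd_window_files a b t) (K * (a + b)) B g"
  shows "g (2 * i * (a + b) + j + 1)
           = mu (2 * i + 1) (window_demand K a b j) (phi (2 * i + 1) W) (psi (window_demand K a b j) W)"
proof -
  let ?f = "2 * i * (a + b) + j + 1"
  have "W \<in> file_configs (K * (a + b)) B"
    unfolding W_def using pad_files_in_file_configs odd_window_files_bound[OF assms(2)] g by blast
  then have "mu (2 * i + 1) (window_demand K a b j) (phi (2 * i + 1) W) (psi (window_demand K a b j) W)
               = W (window_demand K a b j (2 * i + 1))"
    using is_scheme_decodes[OF scheme] window_demand_in_demands[OF assms(6,3)] assms(2,5) by simp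
  also have "window_demand K a b j (2 * i + 1) = ?f"
    using window_demand_odd_user[of i K] assms(2,5) by simp
  also have "?f \<in> odd_window_files a b t"
    using assms(5,6) by (auto simp: odd_window_files_def)
  then have "W ?f = g ?f" by (simp add: W_def pad_files_def)
  finally show ?thesis by simp
qed

lemma scheme_cut_set_bound:
  assumes scheme: "is_scheme K a b B m L phi psi mu" and "2 * t < K" and "a \<ge> 1"
  shows "B * (t * (2 * a + b)) \<le> m * t + L * (2 * a + b)"
proof -
  define n where "n = 2 * a + b"
  define F where "F = odd_window_files a b t"
  define G where "G = PiE F (\<lambda>_. {xs :: bool list. length xs = B})"
  define W where "W g = pad_files F (K * (a + b)) B g" for g
  define E where "E g = (map (\<lambda>i. phi (2 * i + 1) (W g)) [0..<t],
                          map (\<lambda>j. psi (window_demand K a b j) (W g)) [0..<n])" for g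
  have decode: "g (2 * i * (a + b) + j + 1) = mu (2 * i + 1) (window_demand K a b j)
                  (fst (E g) ! i) (snd (E g) ! j)"
    if "g \<in> G" "i < t" "j < n" for g i j
    using odd_user_recovers_window_file[OF scheme assms(2,3)] that
    unfolding E_def W_def F_def G_def n_def by simp
  have injective: "inj_on E G"
  proof (rule inj_onI, rule ext)
    fix g g' f assume g: "g \<in> G" and g': "g' \<in> G" and same: "E g = E g'"
    show "g f = g' f"
    proof (cases "f \<in> F")
      case True
      then obtain i j where "i < t" "j < n" "f = 2 * i * (a + b) + j + 1"
        by (auto simp: F_def odd_window_files_def n_def)
      then show ?thesis using decode[OF g] decode[OF g'] same by simp
    next
      case False
      then show ?thesis
        using PiE_arb[OF g[unfolded G_def] False] PiE_arb[OF g'[unfolded G_def] False] by simp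
    qed
  qed
  have range: "E ` G \<subseteq> {ys. set ys \<subseteq> {y. length y = m} \<and> length ys = t}
                         \<times> {zs. set zs \<subseteq> {z. length z = L} \<and> length zs = n}"
  proof (rule image_subsetI)
    fix g assume "g \<in> G"
    then have "W g \<in> file_configs (K * (a + b)) B"
      unfolding W_def F_def G_def
      using pad_files_in_file_configs odd_window_files_bound[OF assms(2)] by blast
    then show "E g \<in> {ys. set ys \<subseteq> {y. length y = m} \<and> length ys = t}
                         \<times> {zs. set zs \<subseteq> {z. length z = L} \<and> length zs = n}"
      using is_scheme_cache_length[OF scheme] is_scheme_message_length[OF scheme]
        window_demand_in_demands[OF _ assms(3)] assms(2)
      unfolding E_def n_def by auto
  qed
  have "finite F" by (simp add: F_def odd_window_files_def)
  then have "B * card F \<le> m * t + L * n"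
    using injective_encoding_bits_bound injective range unfolding G_def by blast
  then show ?thesis by (simp add: F_def card_odd_window_files n_def)
qed

text \<open>Only needed so that the infimum in \<open>Rstar\<close> is taken over a nonempty set.\<close>
lemma uncoded_load_achievable:
  assumes "M \<ge> 0"
  shows "real (K * (a + b)) \<in> achievable_loads K a b M"
proof -
  define N where "N = K * (a + b)"
  have "is_scheme K a b 1 0 N (\<lambda>k W. []) (\<lambda>d W. map (\<lambda>i. hd (W i)) [1..<N + 1])
          (\<lambda>k d z x. if d k \<in> {1..N} then [x ! (d k - 1)] else [])"
    unfolding is_scheme_def
  proof (intro ballI conjI)
    fix W d k assume W: "W \<in> file_configs (K * (a + b)) 1"
    show "(if d k \<in> {1..N} then [map (\<lambda>i. hd (W i)) [1..<N + 1] ! (d k - 1)] else []) = W (d k)"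
    proof (cases "d k \<in> {1..N}")
      case True
      then have "length (W (d k)) = 1" using W by (simp add: file_configs_def N_def)
      then obtain x where "W (d k) = [x]" by (cases "W (d k)") auto
      moreover have "map (\<lambda>i. hd (W i)) [1..<N + 1] ! (d k - 1) = hd (W (d k))"
        using True by (subst nth_map) (auto simp del: upt_Suc simp: nth_upt)
      ultimately show ?thesis using True by (simp del: upt_Suc)
    next
      case False
      then show ?thesis using W by (simp add: file_configs_def N_def)
    qed
  qed auto
  then show ?thesis
    unfolding achievable_loads_def N_def using assms by force
qed

lemma achievable_load_lower_bound:
  assumes "x \<in> achievable_loads K a b M" and "2 * t < K" and "a \<ge> 1"
  shows "real t - real t / (2 * real a + real b) * M \<le> x"
proof -
  obtain B m L phi psi mu where x: "x = real L / real B" and B: "B \<ge> 1"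
    and memory: "real m \<le> M * real B" and scheme: "is_scheme K a b B m L phi psi mu"
    using assms(1) unfolding achievable_loads_def by blast
  define n where "n = 2 * real a + real b"
  have n: "n > 0" using assms(3) by (simp add: n_def)
  have "real B * real t * n \<le> real m * real t + real L * n"
    using scheme_cut_set_bound[OF scheme assms(2,3)] unfolding n_def
    by (metis of_nat_add of_nat_le_iff of_nat_mult of_nat_numeral mult.assoc)
  also have "\<dots> \<le> M * real B * real t + real L * n"
    using memory by (simp add: mult_right_mono)
  finally have "real B * (real t * n - M * real t) \<le> real L * n"
    by (simp add: algebra_simps)
  then show ?thesis
    using B n by (simp add: x n_def field_simps)
qed

theorem mainTheorem5:
  fixes K a b :: nat and M :: real
  assumes "K \<ge> 3" and "odd K" and "a \<ge> 1" and "b \<ge> 1" and "M \<ge> 0"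
  shows "Rstar K a b M \<ge> (real K - 1) / 2 - (real K - 1) / (2 * (2 * real a + real b)) * M"
proof -
  define t where "t = K div 2"
  have K: "K = 2 * t + 1" using assms(2) by (simp add: t_def)
  have "(real K - 1) / 2 - (real K - 1) / (2 * (2 * real a + real b)) * M
        = real t - real t / (2 * real a + real b) * M"
    using assms(3) by (simp add: K field_simps)
  also have "\<dots> \<le> Inf (achievable_loads K a b M)"
  proof (rule cInf_greatest)
    show "achievable_loads K a b M \<noteq> {}"
      using uncoded_load_achievable[OF assms(5)] by blast
  qed (use achievable_load_lower_bound[OF _ _ assms(3)] K in simp)
  finally show ?thesis unfolding Rstar_def .
qed

end
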